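(* Let $K$ be a field, $n\ge2$, and consider $K^n$ as a left module over the matrix algebra $M_n(K)$ via matrix–vector multiplication. Let $N$ be a $K$-subspace of $K^n$. Then: (i) if $N=K^n$, then $\sigma_\vartheta(N)=\tau_\vartheta(N)=K^n$ for all $\vartheta$; (ii) if $N=0$, then $\sigma_\vartheta(N)=\tau_\vartheta(N)=K^n$ when $\vartheta$ = left, and $\sigma_\vartheta(N)=\tau_\vartheta(N)=0$ when $\vartheta$ is right, pre-two-sided or two-sided; (iii) if $N$ is nonzero and proper, then $\sigma_\vartheta(N)=\tau_\vartheta(N)=0$ for all $\vartheta$.
   Context: For an associative unital algebra $\mathcal A$ over a field $K$, the symbol $\vartheta$ ranges over "left", "right", "pre-two-sided", "two-sided". A subspace $J\subseteq\mathcal A$ is a left (resp. right; two-sided) Mathieu subspace of $\mathcal A$ if whenever $a\in\mathcal A$ satisfies $a^m\in J$ for all $m\ge1$, then for all $b,c\in\mathcal A$ there is $N_0$ with $ba^m\in J$ (resp. $a^mc\in J$; $ba^mc\in J$) for all $m\ge N_0$; pre-two-sided means both left and right. A $\vartheta$-ideal means a left/right/two-sided ideal accordingly, and a two-sided ideal for $\vartheta$ = pre-two-sided. For a left $\mathcal A$-module $\mathcal M$, $u\in\mathcal M$, $N\subseteq \mathcal M$, $(N:u)=\{a\in\mathcal A: au\in N\}$; for a subspace $N$, $\sigma_\vartheta(N)=\{u\in\mathcal M: (N:u)\text{ is a }\vartheta\text{-ideal of }\mathcal A\}$, $\tau_\vartheta(N)=\{u\in\mathcal M: (N:u)\text{ is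 a }\vartheta\text{-Mathieu subspace of }\mathcal A\}$. *)

theory Defs
  imports "HOL-Analysis.Analysis"
begin

text \<open>The algebra M_n(K) is rendered as the type 'a^'n^'n (with 'n a finite index type,
  n = CARD('n)), with product (**), identity mat 1; K^n is 'a^'n, acted on by (*v).\<close>

datatype theta = LeftT | RightT | PreTwoSided | TwoSided

definition mpow :: "'a::semiring_1^'n^'n \<Rightarrow> nat \<Rightarrow> 'a^'n^'n" where
  "mpow A m = ((\<lambda>B. A ** B) ^^ m) (mat 1)"

definition vec_subspace :: "('a::field^'n) set \<Rightarrow> bool" where
  "vec_subspace N \<longleftrightarrow> 0 \<in> N \<and> (\<forall>u\<in>N. \<forall>v\<in>N. u + v \<in> N) \<and> (\<forall>c. \<forall>u\<in>N. c *s u \<in> N)"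

definition mat_subspace :: "('a::field^'n^'n) set \<Rightarrow> bool" where
  "mat_subspace J \<longleftrightarrow> 0 \<in> J \<and> (\<forall>A\<in>J. \<forall>B\<in>J. A + B \<in> J)
     \<and> (\<forall>c. \<forall>A\<in>J. (\<chi> i j. c * A $ i $ j) \<in> J)"

definition left_mathieu :: "('a::field^'n^'n) set \<Rightarrow> bool" where
  "left_mathieu J \<longleftrightarrow> mat_subspace J \<and>
    (\<forall>a. (\<forall>m\<ge>1. mpow a m \<in> J) \<longrightarrow> (\<forall>b. \<exists>N0. \<forall>m\<ge>N0. b ** mpow a m \<in> J))"

definition right_mathieu :: "('a::field^'n^'n) set \<Rightarrow> bool" where
  "right_mathieu J \<longleftrightarrow> mat_subspace J \<and>
    (\<forall>a. (\<forall>m\<ge>1. mpow a m \<in> J) \<longrightarrow> (\<forall>c. \<exists>N0. \<forall>m\<ge>N0. mpow a m ** c \<in> J))"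

definition two_sided_mathieu :: "('a::field^'n^'n) set \<Rightarrow> bool" where
  "two_sided_mathieu J \<longleftrightarrow> mat_subspace J \<and>
    (\<forall>a. (\<forall>m\<ge>1. mpow a m \<in> J) \<longrightarrow> (\<forall>b c. \<exists>N0. \<forall>m\<ge>N0. b ** mpow a m ** c \<in> J))"

fun is_mathieu :: "theta \<Rightarrow> ('a::field^'n^'n) set \<Rightarrow> bool" where
  "is_mathieu LeftT J = left_mathieu J"
| "is_mathieu RightT J = right_mathieu J"
| "is_mathieu PreTwoSided J = (left_mathieu J \<and> right_mathieu J)"
| "is_mathieu TwoSided J = two_sided_mathieu J"

definition left_ideal :: "('a::field^'n^'n) set \<Rightarrow> bool" where
  "left_ideal J \<longleftrightarrow> mat_subspace J \<and> (\<forall>b. \<forall>A\<in>J. b ** A \<in> J)"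

definition right_ideal :: "('a::field^'n^'n) set \<Rightarrow> bool" where
  "right_ideal J \<longleftrightarrow> mat_subspace J \<and> (\<forall>c. \<forall>A\<in>J. A ** c \<in> J)"

fun is_ideal :: "theta \<Rightarrow> ('a::field^'n^'n) set \<Rightarrow> bool" where
  "is_ideal LeftT J = left_ideal J"
| "is_ideal RightT J = right_ideal J"
| "is_ideal PreTwoSided J = (left_ideal J \<and> right_ideal J)"
| "is_ideal TwoSided J = (left_ideal J \<and> right_ideal J)"

definition colon :: "('a::field^'n) set \<Rightarrow> 'a^'n \<Rightarrow> ('a^'n^'n) set" where
  "colon N u = {A. A *v u \<in> N}"

definition sigma_th :: "theta \<Rightarrow> ('a::field^'n) set \<Rightarrow> ('a^'n) set" where
  "sigma_th th N = {u. is_ideal th (colon N u)}"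

definition tau_th :: "theta \<Rightarrow> ('a::field^'n) set \<Rightarrow> ('a^'n) set" where
  "tau_th th N = {u. is_mathieu th (colon N u)}"

end

theory Submission
  imports Defs
begin

(* Every ideal is a Mathieu subspace of the same kind, so sigma <= tau, and the zero
   vector always lies in sigma since (N : 0) is the whole algebra. Hence the theorem
   reduces to three facts about the colon subspaces (N : u):
   - if N = K^n then (N : u) is the whole algebra;
   - if N = 0 then (N : u) is the left annihilator of u, a left ideal;
   - if u <> 0 and N is proper, then (N : u) is neither right nor two-sided Mathieu,
     and if moreover N <> 0 it is not left Mathieu either.
   The counterexamples in the last item are built from rank-one matrices y h^T with
   h(y) = 1: such a matrix is idempotent, so all its powers act like itself, which makes
   the hypothesis "a^m in (N : u) for all m >= 1" a single condition on a. *)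

text \<open>The standard bilinear pairing of K^n with itself; linear functionals are
  represented as pairings with a fixed vector.\<close>
definition pairing :: "'a::field^'n \<Rightarrow> 'a^'n \<Rightarrow> 'a" where
  "pairing x y = (\<Sum>i\<in>UNIV. x$i * y$i)"

definition outer :: "'a::field^'n \<Rightarrow> 'a^'n \<Rightarrow> 'a^'n^'n" where
  "outer x y = (\<chi> i j. x$i * y$j)"

lemma outer_mult_vec: "outer x y *v z = pairing y z *s x"
  by (simp add: vec_eq_iff outer_def pairing_def matrix_vector_mult_def sum_distrib_left
      sum_distrib_right mult.assoc mult.left_commute mult.commute)

lemma pairing_add_left: "pairing (x + z) h = pairing x h + pairing z h"
  by (simp add: pairing_def distrib_right sum.distrib)

lemma pairing_diff_left: "pairing (x - z) h = pairing x h - pairing z h"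
  by (simp add: pairing_def left_diff_distrib sum_subtractf)

lemma pairing_add_right: "pairing h (x + z) = pairing h x + pairing h z"
  by (simp add: pairing_def distrib_left sum.distrib)

lemma pairing_scale_left: "pairing (c *s h) x = c * pairing h x"
  by (simp add: pairing_def sum_distrib_left mult.assoc)

lemma pairing_scale_right: "pairing h (c *s x) = c * pairing h x"
  by (simp add: pairing_def sum_distrib_left mult.left_commute)

lemma pairing_axis_left: "pairing (axis k c) x = c * x$k"
proof -
  have "pairing (axis k c) x = (\<Sum>i\<in>UNIV. if i = k then c * x$i else 0)"
    unfolding pairing_def axis_def by (intro sum.cong) auto
  then show ?thesis by simp
qed

lemma outer_idempotent:
  assumes "pairing h y = 1"
  shows "outer y h *v (outer y h *v x) = outer y h *v x"
  by (simp add: outer_mult_vec pairing_scale_right assms)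

lemma mpow_Suc: "mpow a (Suc m) = a ** mpow a m"
  by (simp add: mpow_def)

lemma mpow_idempotent:
  fixes a :: "'a::comm_semiring_1^'n^'n"
  assumes idem: "\<And>x. a *v (a *v x) = a *v x" and "m \<ge> 1"
  shows "mpow a m *v x = a *v x"
  using \<open>m \<ge> 1\<close>
proof (induction m rule: dec_induct)
  case base
  show ?case by (simp add: mpow_def)
next
  case (step m)
  then show ?case by (simp add: mpow_Suc matrix_vector_mul_assoc[symmetric] idem)
qed

lemma subspace_diff:
  assumes "vec_subspace N" "x \<in> N" "z \<in> N"
  shows "x - z \<in> N"
proof -
  have "x + (-1) *s z \<in> N" using assms unfolding vec_subspace_def by blast
  then show ?thesis by (simp add: vector_sneg_minus1[symmetric])
qed

lemma subspace_cancel_scale: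
  assumes "vec_subspace N" "c *s v \<in> N" "c \<noteq> 0"
  shows "v \<in> N"
proof -
  have "inverse c *s (c *s v) \<in> N" using assms unfolding vec_subspace_def by blast
  then show ?thesis using assms(3) by (simp add: vector_smult_assoc)
qed

lemma nonzero_coordinate: "(u::'a::field^'n) \<noteq> 0 \<Longrightarrow> \<exists>k. u$k \<noteq> 0"
  by (auto simp: vec_eq_iff)

lemma exists_other_index:
  assumes "CARD('n) \<ge> 2"
  shows "\<exists>j::'n. j \<noteq> k"
proof (rule ccontr)
  assume "\<not> ?thesis"
  then have "(UNIV::'n set) = {k}" by auto
  then have "CARD('n) = card {k}" by (rule arg_cong)
  then show False using assms by simp
qed

text \<open>This needs n \<ge> 2: h is a combination of two
  coordinate functionals chosen so that its kernel contains u but not the whole space.\<close>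
lemma functional_vanishing_at:
  fixes N :: "('a::field ^ 'n) set"
  assumes "CARD('n) \<ge> 2" "vec_subspace N" "N \<noteq> UNIV" "u \<noteq> 0"
  obtains h y where "pairing h u = 0" "pairing h y = 1" "y \<notin> N"
proof -
  obtain k where k: "u$k \<noteq> 0" using nonzero_coordinate[OF assms(4)] by blast
  obtain j where j: "j \<noteq> k" using exists_other_index[OF assms(1)] by blast
  define h where "h = axis j (u$k) - axis k (u$j)"
  have hu: "pairing h u = 0"
    unfolding h_def by (simp add: pairing_diff_left pairing_axis_left mult.commute)
  have hz: "pairing h (axis j 1) \<noteq> 0"
    unfolding h_def using j k by (simp add: pairing_diff_left pairing_axis_left axis_def[of j 1])
  obtain x where x: "x \<notin> N" using assms(3) by blast
  text \<open>Either x, axis j 1 or their sum is outside N with nonzero value under h.\<close>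
  have "\<exists>y. y \<notin> N \<and> pairing h y \<noteq> 0"
  proof (cases "pairing h x = 0 \<and> axis j 1 \<in> N")
    case True
    have "x + axis j 1 \<notin> N"
      using x True subspace_diff[OF assms(2), of "x + axis j 1" "axis j 1"] by auto
    moreover have "pairing h (x + axis j 1) \<noteq> 0"
      using True hz by (simp add: pairing_add_right)
    ultimately show ?thesis by blast
  next
    case False
    then show ?thesis using x hz by blast
  qed
  then obtain y0 where y0: "y0 \<notin> N" "pairing h y0 \<noteq> 0" by blast
  let ?y = "inverse (pairing h y0) *s y0"
  have "pairing h ?y = 1" using y0 by (simp add: pairing_scale_right)
  moreover have "?y \<notin> N"
    using subspace_cancel_scale[OF assms(2), of "inverse (pairing h y0)" y0] y0 by auto
  ultimately show ?thesis using that hu by blast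
qed

lemma functional_nonvanishing_at:
  fixes u w :: "'a::field ^ 'n"
  assumes "u \<noteq> 0" "w \<noteq> 0"
  obtains g where "pairing g w = 1" "pairing g u \<noteq> 0"
proof -
  obtain k where k: "u$k \<noteq> 0" using nonzero_coordinate[OF assms(1)] by blast
  obtain l where l: "w$l \<noteq> 0" using nonzero_coordinate[OF assms(2)] by blast
  text \<open>One of the coordinate functionals at k, at l, or their sum works up to scaling.\<close>
  have "\<exists>g. pairing g u \<noteq> 0 \<and> pairing g w \<noteq> 0"
  proof (cases "w$k \<noteq> 0 \<or> u$l \<noteq> 0")
    case True
    then show ?thesis using k l
      by (metis mult_1 pairing_axis_left)
  next
    case False
    then show ?thesis using k l
      by (intro exI[of _ "axis k 1 + axis l 1"]) (simp add: pairing_add_left pairing_axis_left)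
  qed
  then obtain g0 where g0: "pairing g0 u \<noteq> 0" "pairing g0 w \<noteq> 0" by blast
  show ?thesis
    using that[of "inverse (pairing g0 w) *s g0"] g0 by (simp add: pairing_scale_left)
qed

lemma colon_subspace:
  assumes "vec_subspace N"
  shows "mat_subspace (colon N u)"
proof -
  have scale: "(\<chi> i j. c * A $ i $ j) *v u = c *s (A *v u)" for c and A :: "'a^'b^'b"
    by (simp add: vec_eq_iff matrix_vector_mult_def sum_distrib_left mult.assoc)
  show ?thesis using assms
    unfolding mat_subspace_def colon_def vec_subspace_def
    by (simp add: matrix_vector_mult_add_rdistrib scale)
qed

lemma not_right_mathieu_witness:
  assumes "\<forall>m\<ge>1. mpow a m \<in> J" "\<And>m. m \<ge> 1 \<Longrightarrow> mpow a m ** c \<notin> J"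
  shows "\<not> right_mathieu J \<and> \<not> two_sided_mathieu J"
proof -
  have no_bound: "\<not> (\<exists>N0. \<forall>m\<ge>N0. mpow a m ** c \<in> J)"
    using assms(2) by (metis max.cobounded1 max.cobounded2)
  then have "\<not> right_mathieu J" using assms(1) unfolding right_mathieu_def by blast
  moreover have "\<not> two_sided_mathieu J"
    using assms(1) no_bound unfolding two_sided_mathieu_def
    by (metis matrix_mul_lid)
  ultimately show ?thesis by blast
qed

lemma not_left_mathieu_witness:
  assumes "\<forall>m\<ge>1. mpow a m \<in> J" "\<And>m. m \<ge> 1 \<Longrightarrow> b ** mpow a m \<notin> J"
  shows "\<not> left_mathieu J"
  using assms unfolding left_mathieu_def by (metis max.cobounded1 max.cobounded2)

text \<open>For u \<noteq> 0 and N proper, (N : u) is neither right nor two-sided Mathieu: with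
  h(u) = 0, h(y) = 1, y \<notin> N, the projection a = y h^T kills u, while
  a^m (y e^T) u = y for e(u) = 1.\<close>
lemma colon_not_right_mathieu:
  fixes N :: "('a::field ^ 'n) set"
  assumes "CARD('n) \<ge> 2" "vec_subspace N" "N \<noteq> UNIV" "u \<noteq> 0"
  shows "\<not> right_mathieu (colon N u) \<and> \<not> two_sided_mathieu (colon N u)"
proof -
  obtain h y where hu: "pairing h u = 0" and hy: "pairing h y = 1" and yN: "y \<notin> N"
    using functional_vanishing_at[OF assms] .
  obtain e where eu: "pairing e u = 1"
    using functional_nonvanishing_at[OF assms(4) assms(4)] by blast
  let ?a = "outer y h" and ?c = "outer y e"
  have powers: "mpow ?a m *v v = ?a *v v" if "m \<ge> 1" for m v
    using mpow_idempotent[OF outer_idempotent[OF hy] that] .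
  have "mpow ?a m *v u = 0" if "m \<ge> 1" for m
    using powers[OF that] by (simp add: outer_mult_vec hu)
  then have "\<forall>m\<ge>1. mpow ?a m \<in> colon N u"
    using assms(2) by (simp add: colon_def vec_subspace_def)
  moreover have "mpow ?a m ** ?c \<notin> colon N u" if "m \<ge> 1" for m
  proof -
    have "(mpow ?a m ** ?c) *v u = y"
      using powers[OF that]
      by (simp add: matrix_vector_mul_assoc[symmetric] outer_mult_vec eu hy)
    then show ?thesis using yN by (simp add: colon_def)
  qed
  ultimately show ?thesis by (rule not_right_mathieu_witness)
qed

text \<open>For u \<noteq> 0 and N proper and nonzero, (N : u) is not left Mathieu: with w \<in> N
  nonzero, g(w) = 1 and s = g(u) \<noteq> 0, the projection a = w g^T maps u to s w \<in> N,
  while (v e^T) a^m u = s v \<notin> N for v \<notin> N and e(w) = 1.\<close>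
lemma colon_not_left_mathieu:
  fixes N :: "('a::field ^ 'n) set"
  assumes "vec_subspace N" "N \<noteq> UNIV" "N \<noteq> {0}" "u \<noteq> 0"
  shows "\<not> left_mathieu (colon N u)"
proof -
  obtain w where w: "w \<in> N" "w \<noteq> 0"
    using assms(1,3) unfolding vec_subspace_def by blast
  obtain v where v: "v \<notin> N" using assms(2) by blast
  obtain g where gw: "pairing g w = 1" and s: "pairing g u \<noteq> 0"
    using functional_nonvanishing_at[OF assms(4) w(2)] .
  obtain e where ew: "pairing e w = 1"
    using functional_nonvanishing_at[OF w(2) w(2)] by blast
  let ?a = "outer w g" and ?b = "outer v e" and ?s = "pairing g u"
  have powers: "mpow ?a m *v u = ?s *s w" if "m \<ge> 1" for m
    using mpow_idempotent[OF outer_idempotent[OF gw] that] by (simp add: outer_mult_vec)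
  then have "\<forall>m\<ge>1. mpow ?a m \<in> colon N u"
    using w(1) assms(1) by (simp add: colon_def vec_subspace_def)
  moreover have "?b ** mpow ?a m \<notin> colon N u" if "m \<ge> 1" for m
  proof -
    have "(?b ** mpow ?a m) *v u = ?s *s v"
      using powers[OF that]
      by (simp add: matrix_vector_mul_assoc[symmetric] outer_mult_vec pairing_scale_right ew)
    then show ?thesis using subspace_cancel_scale[OF assms(1) _ s] v by (auto simp: colon_def)
  qed
  ultimately show ?thesis by (rule not_left_mathieu_witness)
qed

lemma ideal_imp_mathieu: "is_ideal th J \<Longrightarrow> is_mathieu th J"
  by (cases th)
    (auto simp: left_ideal_def right_ideal_def left_mathieu_def right_mathieu_def
      two_sided_mathieu_def intro: exI[of _ 1])

lemma sigma_subset_tau: "sigma_th th N \<subseteq> tau_th th N"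
  using ideal_imp_mathieu by (auto simp: sigma_th_def tau_th_def)

lemma univ_is_ideal: "is_ideal th (UNIV :: ('a::field^'n^'n) set)"
  by (cases th) (auto simp: left_ideal_def right_ideal_def mat_subspace_def)

lemma sigma_tau_univ:
  assumes "\<And>u. is_ideal th (colon N u)"
  shows "sigma_th th N = UNIV \<and> tau_th th N = UNIV"
  using assms sigma_subset_tau[of th N] by (auto simp: sigma_th_def)

lemma sigma_tau_zero:
  assumes "vec_subspace N" "\<And>u. u \<noteq> 0 \<Longrightarrow> \<not> is_mathieu th (colon N u)"
  shows "sigma_th th N = {0} \<and> tau_th th N = {0}"
proof -
  have "colon N 0 = UNIV" using assms(1) by (auto simp: colon_def vec_subspace_def)
  then have "0 \<in> sigma_th th N" using univ_is_ideal by (simp add: sigma_th_def)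
  moreover have "tau_th th N \<subseteq> {0}" using assms(2) by (auto simp: tau_th_def)
  ultimately show ?thesis using sigma_subset_tau[of th N] by auto
qed

lemma colon_zero_left_ideal: "left_ideal (colon {0} (u :: 'a::field^'n))"
proof -
  have "vec_subspace ({0} :: ('a^'n) set)" by (simp add: vec_subspace_def)
  from colon_subspace[OF this] show ?thesis
    by (simp add: left_ideal_def colon_def matrix_vector_mul_assoc[symmetric])
qed

lemma zero_ne_univ: "({0} :: ('a::field^'n) set) \<noteq> UNIV"
proof
  fix k :: 'n
  assume "{0} = (UNIV :: ('a^'n) set)"
  then have "axis k (1::'a) = 0" by (metis UNIV_I singletonD)
  then show False by (metis axis_nth one_neq_zero zero_index)
qed

theorem proposition5p1:
  fixes N :: "('a::field ^ 'n) set"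
  assumes "CARD('n) \<ge> 2"
    and "vec_subspace N"
  shows "(N = UNIV \<longrightarrow> (\<forall>th. sigma_th th N = UNIV \<and> tau_th th N = UNIV))
    \<and> (N = {0} \<longrightarrow>
         (sigma_th LeftT N = UNIV \<and> tau_th LeftT N = UNIV)
       \<and> (\<forall>th. th \<noteq> LeftT \<longrightarrow> sigma_th th N = {0} \<and> tau_th th N = {0}))
    \<and> (N \<noteq> {0} \<and> N \<noteq> UNIV \<longrightarrow> (\<forall>th. sigma_th th N = {0} \<and> tau_th th N = {0}))"
proof -
  have full: "sigma_th th (UNIV :: ('a^'n) set) = UNIV \<and> tau_th th (UNIV :: ('a^'n) set) = UNIV"
    for th
    by (rule sigma_tau_univ) (simp add: colon_def univ_is_ideal)
  have zero_left: "sigma_th LeftT {0 :: 'a^'n} = UNIV \<and> tau_th LeftT {0 :: 'a^'n} = UNIV"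
    by (rule sigma_tau_univ) (simp add: colon_zero_left_ideal)
  have not_mathieu: "\<not> is_mathieu th (colon N u)"
    if "N \<noteq> UNIV" "u \<noteq> 0" "th \<noteq> LeftT \<or> N \<noteq> {0}" for th u
    using colon_not_right_mathieu[OF assms that(1,2)]
      colon_not_left_mathieu[OF assms(2) that(1) _ that(2)] that(3)
    by (cases th) auto
  have zero: "sigma_th th N = {0} \<and> tau_th th N = {0}"
    if "N \<noteq> UNIV" "th \<noteq> LeftT \<or> N \<noteq> {0}" for th
    using sigma_tau_zero[OF assms(2) not_mathieu[OF that(1) _ that(2)]] .
  have "N = {0} \<Longrightarrow> N \<noteq> UNIV" using zero_ne_univ by blast
  then show ?thesis
    using full zero_left zero by auto
qed

end
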